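(* Let $n\ge4$, let $m=\lfloor n/2\rfloor$, and let $\pi=(m-1)^{m-1}(n-m)^{n-2m+2}(n-1)^{m-1}$ (exponents denote multiplicities). Then $\pi$ is graphical, $\pi\in\mathrm{BM}(\text{$1$-binding})$, but $\pi\notin\mathrm{BM}(\text{hamiltonian})$.
   Context: Graphs are finite and simple; a graphical sequence is a nondecreasing integer sequence that is the degree sequence of some graph (a realization). $\pi'\ge\pi$ means termwise $\ge$. A graphical sequence is forcibly $P$ if every realization has $P$; for increasing $P$, $\mathrm{BM}(P)$ is the set of graphical $\pi$ such that every graphical $\pi'\ge\pi$ of the same length is forcibly $P$. For $S\subseteq V(G)$ let $N(S)$ be the set of vertices adjacent to some vertex of $S$; with $\mathcal S=\{S\subseteq V(G): S\ne\emptyset,\ N(S)\ne V(G)\}$, the binding number is $\mathrm{bind}(G)=\min_{S\in\mathcal S}|N(S)|/|S|$ (and $\mathrm{bind}(K_n)=n-1$). $G$ is $b$-binding if $\mathrm{bind}(G)\ge b$. *)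

theory Defs
  imports Complex_Main
begin

definition graph_on :: "nat \<Rightarrow> (nat \<Rightarrow> nat \<Rightarrow> bool) \<Rightarrow> bool" where
  "graph_on n E \<longleftrightarrow> (\<forall>u v. E u v \<longrightarrow> u < n \<and> v < n \<and> u \<noteq> v) \<and> (\<forall>u v. E u v \<longrightarrow> E v u)"

definition deg :: "(nat \<Rightarrow> nat \<Rightarrow> bool) \<Rightarrow> nat \<Rightarrow> nat" where
  "deg E v = card {u. E v u}"

text \<open>E is a realization of the sequence ds: a graph on {0..<length ds} whose
degree multiset is that of ds (vertices may be labelled arbitrarily).\<close>

definition realizes :: "(nat \<Rightarrow> nat \<Rightarrow> bool) \<Rightarrow> nat list \<Rightarrow> bool" where
  "realizes E ds \<longleftrightarrow> graph_on (length ds) E \<and>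
     sort (map (deg E) [0..<length ds]) = ds"

definition graphical :: "nat list \<Rightarrow> bool" where
  "graphical ds \<longleftrightarrow> sorted ds \<and> (\<exists>E. realizes E ds)"

definition forcibly :: "(nat \<Rightarrow> (nat \<Rightarrow> nat \<Rightarrow> bool) \<Rightarrow> bool) \<Rightarrow> nat list \<Rightarrow> bool" where
  "forcibly P ds \<longleftrightarrow> graphical ds \<and> (\<forall>E. realizes E ds \<longrightarrow> P (length ds) E)"

definition BM :: "(nat \<Rightarrow> (nat \<Rightarrow> nat \<Rightarrow> bool) \<Rightarrow> bool) \<Rightarrow> nat list \<Rightarrow> bool" where
  "BM P ds \<longleftrightarrow> graphical ds \<and>
     (\<forall>ds'. graphical ds' \<and> length ds' = length ds \<and> (\<forall>i<length ds. ds ! i \<le> ds' ! i)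
            \<longrightarrow> forcibly P ds')"

definition nbhd :: "(nat \<Rightarrow> nat \<Rightarrow> bool) \<Rightarrow> nat set \<Rightarrow> nat set" where
  "nbhd E S = {v. \<exists>u\<in>S. E u v}"

definition bind :: "nat \<Rightarrow> (nat \<Rightarrow> nat \<Rightarrow> bool) \<Rightarrow> real" where
  "bind n E = Min {real (card (nbhd E S)) / real (card S) | S.
                   S \<subseteq> {..<n} \<and> S \<noteq> {} \<and> nbhd E S \<noteq> {..<n}}"

definition binding :: "real \<Rightarrow> nat \<Rightarrow> (nat \<Rightarrow> nat \<Rightarrow> bool) \<Rightarrow> bool" where
  "binding b n E \<longleftrightarrow> bind n E \<ge> b"

definition hamiltonian :: "nat \<Rightarrow> (nat \<Rightarrow> nat \<Rightarrow> bool) \<Rightarrow> bool" where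
  "hamiltonian n E \<longleftrightarrow> n \<ge> 3 \<and> (\<exists>p. distinct p \<and> set p = {..<n} \<and>
      (\<forall>i. Suc i < length p \<longrightarrow> E (p ! i) (p ! Suc i)) \<and> E (last p) (hd p))"

end

theory Submission
  imports Defs
begin

text \<open>
  Write \<open>a = \<lfloor>n/2\<rfloor> - 1\<close>; the sequence of the theorem is \<open>a\<^sup>a (n-a-1)\<^sup>n\<^sup>-\<^sup>2\<^sup>a (n-1)\<^sup>a\<close>.

  If some S has |N(S)| < |S| = k, then the k vertices of S have degree
  at most k - 1 and the at least n - k + 1 vertices outside N(S) have degree at
  most n - k; in the sorted degree sequence this gives \<open>d\<^sub>k < k\<close> and
  \<open>d\<^sub>n\<^sub>-\<^sub>k\<^sub>+\<^sub>1 \<le> n - k\<close>. Excluding this pattern is a condition on upper bounds of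
  entries, hence inherited by every termwise larger sequence, so any graphical
  sequence satisfying it lies in BM(1-binding).

  Along a Hamiltonian cycle the predecessors of the vertices of a
  set I lie in N(I); if \<open>|N(I)| \<le> |I|\<close> they exhaust N(I), and then the positions of
  \<open>I \<union> N(I)\<close> are closed under the cyclic successor, so \<open>I \<union> N(I) = V\<close>. The
  realization with a independent vertices joined exactly to a dominating
  vertices violates this, so the sequence is not forcibly Hamiltonian.
\<close>

text \<open>Applied with f = deg E, this turns
  a set of low-degree vertices into an upper bound on the sorted degree sequence.\<close>

lemma sorted_map_nth_le:
  fixes f :: "nat \<Rightarrow> nat"
  assumes X: "X \<subseteq> {..<n}" "Suc k \<le> card X" and bound: "\<forall>x\<in>X. f x \<le> c"
  shows "sort (map f [0..<n]) ! k \<le> c"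
proof (rule ccontr)
  define ys where "ys = sort (map f [0..<n])"
  assume "\<not> ys ! k \<le> c"
  have small_prefix: "{j. j < length ys \<and> ys ! j \<le> c} \<subseteq> {..<k}"
  proof (intro subsetI, rule ccontr)
    fix j assume "j \<in> {j. j < length ys \<and> ys ! j \<le> c}" "j \<notin> {..<k}"
    moreover have "sorted ys" by (simp add: ys_def)
    ultimately show False
      using \<open>\<not> ys ! k \<le> c\<close> sorted_nth_mono[of ys k j] by auto
  qed
  have "card X \<le> card {i. i < n \<and> f i \<le> c}"
    using X bound by (intro card_mono) auto
  also have "\<dots> = length (filter (\<lambda>x. x \<le> c) (map f [0..<n]))"
    by (simp add: length_filter_conv_card cong: conj_cong)
  also have "\<dots> = length (filter (\<lambda>x. x \<le> c) ys)"
    by (simp only: ys_def filter_sort length_sort)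
  also have "\<dots> = card {j. j < length ys \<and> ys ! j \<le> c}"
    by (rule length_filter_conv_card)
  also have "\<dots> \<le> k"
    using card_mono[OF finite_lessThan small_prefix] by simp
  finally show False using X by simp
qed

section \<open>A degree condition forcing binding number at least 1\<close>

text \<open>A vertex of S has all its neighbours in N(S).\<close>

lemma deg_le_card_nbhd:
  assumes "graph_on n E" "x \<in> S"
  shows "deg E x \<le> card (nbhd E S)"
proof -
  have "nbhd E S \<subseteq> {..<n}" using assms(1) by (auto simp: nbhd_def graph_on_def)
  moreover have "{u. E x u} \<subseteq> nbhd E S" using assms(2) by (auto simp: nbhd_def)
  ultimately show ?thesis unfolding deg_def by (meson card_mono finite_lessThan finite_subset)
qed

text \<open>A vertex outside N(S) has no neighbour in S.\<close>

lemma deg_outside_nbhd: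
  assumes "graph_on n E" "S \<subseteq> {..<n}" "x \<notin> nbhd E S"
  shows "deg E x \<le> n - card S"
proof -
  have "{u. E x u} \<subseteq> {..<n} - S"
    using assms by (auto simp: nbhd_def graph_on_def)
  then have "deg E x \<le> card ({..<n} - S)" unfolding deg_def by (simp add: card_mono)
  also have "\<dots> = n - card S"
    using assms(2) by (simp add: card_Diff_subset finite_subset)
  finally show ?thesis .
qed

text \<open>Its failure at k is exactly what a set S with |S| = k and |N(S)| < k produces.\<close>

definition binding_degree_condition :: "nat list \<Rightarrow> bool" where
  "binding_degree_condition ds \<longleftrightarrow>
     (\<forall>k. 1 \<le> k \<and> k \<le> length ds \<longrightarrow>
          \<not> (ds ! (k - 1) < k \<and> ds ! (length ds - k) \<le> length ds - k))"

text \<open>The condition only refers to upper bounds on entries, so it is inherited by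
  termwise larger sequences of the same length.\<close>

lemma binding_degree_condition_mono:
  assumes "binding_degree_condition ds" "length ds' = length ds"
    and "\<forall>i<length ds. ds ! i \<le> ds' ! i"
  shows "binding_degree_condition ds'"
  unfolding binding_degree_condition_def
proof (intro allI impI notI)
  fix k assume k: "1 \<le> k \<and> k \<le> length ds'"
    and bad: "ds' ! (k - 1) < k \<and> ds' ! (length ds' - k) \<le> length ds' - k"
  have "ds ! (k - 1) \<le> ds' ! (k - 1)" "ds ! (length ds - k) \<le> ds' ! (length ds - k)"
    using assms(2,3) k by auto
  then show False
    using assms(1,2) k bad unfolding binding_degree_condition_def by fastforce
qed

text \<open>A set S with |N(S)| < |S| violates the degree condition at k = |S|: its own
  k vertices have degree below k, and the at least n - k + 1 vertices outside
  N(S) have degree at most n - k.\<close>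

lemma small_nbhd_violates_condition:
  assumes real: "realizes E ds" and S: "S \<subseteq> {..<length ds}" "S \<noteq> {}"
    and small: "card (nbhd E S) < card S"
  shows "\<not> binding_degree_condition ds"
proof -
  define n where "n = length ds"
  define k where "k = card S"
  have G: "graph_on n E" and sorted_deg: "sort (map (deg E) [0..<n]) = ds"
    using real by (auto simp: realizes_def n_def)
  have Sn: "S \<subseteq> {..<n}" using S by (simp add: n_def)
  have k: "1 \<le> k" "k \<le> n"
    using S by (auto simp: k_def n_def Suc_le_eq card_gt_0_iff finite_subset
        intro: card_mono[of "{..<length ds}", simplified])
  have "\<forall>x\<in>S. deg E x \<le> k - 1"
  proof
    fix x assume "x \<in> S"
    then show "deg E x \<le> k - 1" using deg_le_card_nbhd[OF G, of x S] small k_def by linarith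
  qed
  then have low: "ds ! (k - 1) < k"
    using sorted_map_nth_le[of S n "k - 1" "deg E" "k - 1"] Sn k
    by (simp add: sorted_deg k_def)
  define T where "T = {..<n} - nbhd E S"
  have "nbhd E S \<subseteq> {..<n}" using G by (auto simp: nbhd_def graph_on_def)
  then have "Suc (n - k) \<le> card T"
    using small k by (simp add: T_def card_Diff_subset finite_subset k_def)
  moreover have "\<forall>x\<in>T. deg E x \<le> n - k"
    using deg_outside_nbhd[OF G Sn] unfolding T_def k_def by blast
  ultimately have high: "ds ! (n - k) \<le> n - k"
    using sorted_map_nth_le[of T n "n - k" "deg E" "n - k"]
    by (simp add: sorted_deg T_def)
  show ?thesis
    using k low high unfolding binding_degree_condition_def n_def[symmetric] by blast
qed

text \<open>To show \<open>bind \<ge> b\<close> it suffices to bound every ratio |N(S)|/|S| from below;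
  the minimum is over a nonempty set because S = {0} qualifies (0 is not its own
  neighbour).\<close>

lemma bindingI:
  fixes b :: real
  assumes G: "graph_on n E" and "0 < n"
    and ratio: "\<And>S. S \<subseteq> {..<n} \<Longrightarrow> S \<noteq> {} \<Longrightarrow> nbhd E S \<noteq> {..<n} \<Longrightarrow>
                   b * card S \<le> card (nbhd E S)"
  shows "binding b n E"
proof -
  define M where "M = {real (card (nbhd E S)) / real (card S) | S.
                   S \<subseteq> {..<n} \<and> S \<noteq> {} \<and> nbhd E S \<noteq> {..<n}}"
  have "M \<subseteq> (\<lambda>S. real (card (nbhd E S)) / real (card S)) ` Pow {..<n}"
    unfolding M_def by auto
  then have "finite M" by (rule finite_subset) simp
  moreover have "0 \<notin> nbhd E {0}" using G by (auto simp: nbhd_def graph_on_def)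
  then have "M \<noteq> {}" using \<open>0 < n\<close> unfolding M_def by blast
  moreover have "b \<le> x" if "x \<in> M" for x
  proof -
    obtain S where S: "S \<subseteq> {..<n}" "S \<noteq> {}" "nbhd E S \<noteq> {..<n}"
      and x: "x = real (card (nbhd E S)) / real (card S)"
      using \<open>x \<in> M\<close> unfolding M_def by blast
    have "real (card S) > 0" using S by (simp add: card_gt_0_iff finite_subset)
    then show ?thesis using ratio[OF S] by (simp add: x pos_le_divide_eq)
  qed
  ultimately show ?thesis unfolding binding_def bind_def M_def[symmetric] by simp
qed

lemma binding_degree_condition_forces_binding:
  assumes "realizes E ds" "binding_degree_condition ds" "ds \<noteq> []"
  shows "binding 1 (length ds) E"
proof (rule bindingI)
  show "graph_on (length ds) E" using assms(1) by (simp add: realizes_def)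
  show "0 < length ds" using assms(3) by simp
  fix S assume "S \<subseteq> {..<length ds}" "S \<noteq> {}"
  then have "\<not> card (nbhd E S) < card S"
    using small_nbhd_violates_condition[OF assms(1)] assms(2) by blast
  then show "1 * real (card S) \<le> real (card (nbhd E S))" by simp
qed

lemma BM_binding_of_condition:
  assumes "graphical ds" "binding_degree_condition ds" "ds \<noteq> []"
  shows "BM (binding 1) ds"
  unfolding BM_def forcibly_def
proof (intro conjI assms allI impI)
  fix ds' E
  assume ds': "graphical ds' \<and> length ds' = length ds \<and> (\<forall>i<length ds. ds ! i \<le> ds' ! i)"
    and "realizes E ds'"
  moreover have "binding_degree_condition ds'"
    using binding_degree_condition_mono assms(2) ds' by blast
  ultimately show "binding 1 (length ds') E"
    using binding_degree_condition_forces_binding assms(3) by fastforce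
next
  fix ds' assume "graphical ds' \<and> length ds' = length ds \<and> (\<forall>i<length ds. ds ! i \<le> ds' ! i)"
  then show "graphical ds'" by simp
qed

section \<open>A neighbourhood condition necessary for hamiltonicity\<close>

lemma hamiltonian_cycle_positions:
  assumes "hamiltonian n E"
  obtains p where "length p = n" "distinct p" "set p = {..<n}"
    "\<And>i. i < n \<Longrightarrow> E (p ! i) (p ! (Suc i mod n))"
proof -
  obtain p where p: "distinct p" "set p = {..<n}"
      "\<forall>i. Suc i < length p \<longrightarrow> E (p ! i) (p ! Suc i)" "E (last p) (hd p)"
    and "n \<ge> 3" using assms unfolding hamiltonian_def by blast
  have len: "length p = n" using distinct_card[OF p(1)] p(2) by simp
  have "E (p ! i) (p ! (Suc i mod n))" if "i < n" for i
  proof (cases "Suc i = n")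
    case True
    moreover have "p \<noteq> []" using len \<open>n \<ge> 3\<close> by auto
    ultimately have "p ! i = last p" "p ! (Suc i mod n) = hd p"
      using len True[symmetric] by (simp_all add: last_conv_nth hd_conv_nth)
    then show ?thesis using p(4) by simp
  next
    case False
    then show ?thesis using p(3) that len by simp
  qed
  then show thesis using that len p(1,2) by blast
qed

lemma cyclic_successor_closed:
  assumes Q: "Q \<subseteq> {..<n}" "j \<in> Q" and closed: "\<And>i. i \<in> Q \<Longrightarrow> Suc i mod n \<in> Q"
  shows "Q = {..<n}"
proof -
  have j: "j < n" using Q by auto
  have reach: "(j + d) mod n \<in> Q" for d
  proof (induction d)
    case 0 then show ?case using Q j by simp
  next
    case (Suc d)
    then show ?case using closed[of "(j + d) mod n"] by (simp add: mod_Suc_eq)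
  qed
  have "i \<in> Q" if "i < n" for i
    using reach[of "n - j + i"] j that by simp
  then show ?thesis using Q by auto
qed

lemma card_positions:
  assumes "distinct p" "X \<subseteq> set p"
  shows "card {i. i < length p \<and> p ! i \<in> X} = card X"
proof (rule bij_betw_same_card[of "nth p"])
  have "X \<subseteq> nth p ` {i. i < length p \<and> p ! i \<in> X}"
  proof
    fix x assume "x \<in> X"
    then have "x \<in> set p" using assms(2) by blast
    then obtain i where "i < length p" "p ! i = x" by (auto simp: in_set_conv_nth)
    then show "x \<in> nth p ` {i. i < length p \<and> p ! i \<in> X}" using \<open>x \<in> X\<close> by force
  qed
  then show "bij_betw (nth p) {i. i < length p \<and> p ! i \<in> X} X"
    using assms(1) by (auto simp: bij_betw_def inj_on_def nth_eq_iff_index_eq)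
qed

text \<open>In a Hamiltonian graph every vertex set I with \<open>I \<union> N(I) \<noteq> V\<close> has more
  neighbours than elements: along the cycle the predecessors of the vertices of
  I lie in N(I), and if |N(I)| \<le> |I| they fill N(I), so the positions of \<open>I \<union> N(I)\<close>
  would be closed under the successor.\<close>

lemma hamiltonian_nbhd_exceeds:
  assumes ham: "hamiltonian n E" and G: "graph_on n E"
    and I: "I \<subseteq> {..<n}" "I \<noteq> {}" and proper: "I \<union> nbhd E I \<noteq> {..<n}"
  shows "card I < card (nbhd E I)"
proof (rule ccontr)
  assume "\<not> card I < card (nbhd E I)"
  then have few: "card (nbhd E I) \<le> card I" by simp
  obtain p where p: "length p = n" "distinct p" "set p = {..<n}"
    and cyc: "\<And>i. i < n \<Longrightarrow> E (p ! i) (p ! (Suc i mod n))"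
    using hamiltonian_cycle_positions[OF ham] by blast
  define s where "s i = Suc i mod n" for i
  define PI where "PI = {i. i < n \<and> p ! i \<in> I}"
  define PN where "PN = {i. i < n \<and> p ! i \<in> nbhd E I}"
  have N: "nbhd E I \<subseteq> {..<n}" using G by (auto simp: nbhd_def graph_on_def)
  have card_PI: "card PI = card I" and card_PN: "card PN = card (nbhd E I)"
    using card_positions[OF p(2), of I] card_positions[OF p(2), of "nbhd E I"] I N
    by (simp_all add: PI_def PN_def p)
  have "0 < n" using I by auto
  have s_less: "i < n \<Longrightarrow> s i < n" for i using \<open>0 < n\<close> by (simp add: s_def)
  have s_perm: "s ` {..<n} = {..<n}"
  proof (rule endo_inj_surj)
    have "s i = (if Suc i = n then 0 else Suc i)" if "i < n" for i
      using that by (simp add: s_def mod_Suc)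
    then show "inj_on s {..<n}" by (auto simp: inj_on_def split: if_splits)
  qed (use s_less in auto)
  have succ_PI: "s ` PI \<subseteq> PN"
  proof
    fix j assume "j \<in> s ` PI"
    then obtain i where i: "i < n" "p ! i \<in> I" "j = s i" unfolding PI_def by blast
    then have "p ! j \<in> nbhd E I" using cyc[OF i(1)] by (auto simp: s_def nbhd_def)
    then show "j \<in> PN" using s_less i by (simp add: PN_def)
  qed
  have "PI \<subseteq> s ` PN"
  proof
    fix j assume j: "j \<in> PI"
    then obtain i where i: "i < n" "j = s i" using s_perm unfolding PI_def by blast
    then have "E (p ! j) (p ! i)" using cyc G by (auto simp: s_def graph_on_def)
    then have "i \<in> PN" using j i by (auto simp: PI_def PN_def nbhd_def)
    then show "j \<in> s ` PN" using i by blast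
  qed
  moreover have "card (s ` PN) \<le> card PI"
    using card_image_le[of PN s] few card_PI card_PN by (simp add: PN_def)
  moreover have "finite (s ` PN)" by (simp add: PN_def)
  ultimately have pred_PI: "PI = s ` PN"
  proof -
    have "card PI = card (s ` PN)"
      using card_mono[OF \<open>finite (s ` PN)\<close> \<open>PI \<subseteq> s ` PN\<close>] \<open>card (s ` PN) \<le> card PI\<close>
      by linarith
    then show ?thesis using card_subset_eq[OF \<open>finite (s ` PN)\<close> \<open>PI \<subseteq> s ` PN\<close>] by simp
  qed
  define Q where "Q = PI \<union> PN"
  have "card PI > 0" using card_PI I by (simp add: card_gt_0_iff finite_subset)
  then obtain j where "j \<in> PI" by fastforce
  moreover have "s i \<in> Q" if "i \<in> Q" for i
    using that succ_PI pred_PI by (auto simp: Q_def)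
  ultimately have "Q = {..<n}"
    by (intro cyclic_successor_closed[of Q n j]) (auto simp: Q_def PI_def PN_def s_def)
  have "{..<n} \<subseteq> I \<union> nbhd E I"
  proof
    fix v assume "v \<in> {..<n}"
    then obtain i where "i < n" "v = p ! i" using p by (metis in_set_conv_nth)
    then show "v \<in> I \<union> nbhd E I"
      using \<open>Q = {..<n}\<close> by (auto simp: Q_def PI_def PN_def)
  qed
  then show False using proper I N by blast
qed

text \<open>Every sequence dominates itself, so a realization of ds without P shows
  that ds is not in BM(P).\<close>

lemma not_BM_of_realization:
  assumes "realizes E ds" "\<not> P (length ds) E"
  shows "\<not> BM P ds"
  using assms unfolding BM_def forcibly_def by auto

section \<open>The extremal sequence and its realization\<close>

text \<open>\<open>a\<^sup>a (n-a-1)\<^sup>n\<^sup>-\<^sup>2\<^sup>a (n-1)\<^sup>a\<close>; for \<open>a = \<lfloor>n/2\<rfloor> - 1\<close> this is the sequence of the theorem.\<close>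

definition extremal_seq :: "nat \<Rightarrow> nat \<Rightarrow> nat list" where
  "extremal_seq a n = replicate a a @ replicate (n - 2 * a) (n - a - 1) @ replicate a (n - 1)"

lemma extremal_seq_length: "2 * a \<le> n \<Longrightarrow> length (extremal_seq a n) = n"
  by (simp add: extremal_seq_def)

lemma extremal_seq_nth:
  "2 * a \<le> n \<Longrightarrow> i < n \<Longrightarrow>
   extremal_seq a n ! i = (if i < a then a else if i < n - a then n - a - 1 else n - 1)"
  by (auto simp: extremal_seq_def nth_append)

lemma extremal_seq_sorted: "2 * a + 2 \<le> n \<Longrightarrow> sorted (extremal_seq a n)"
  by (auto simp: extremal_seq_def sorted_append)

lemma extremal_seq_condition:
  assumes "1 \<le> a" "2 * a + 2 \<le> n"
  shows "binding_degree_condition (extremal_seq a n)"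
  unfolding binding_degree_condition_def
proof (intro allI impI notI)
  fix k
  assume "1 \<le> k \<and> k \<le> length (extremal_seq a n)"
    and bad: "extremal_seq a n ! (k - 1) < k \<and>
              extremal_seq a n ! (length (extremal_seq a n) - k) \<le> length (extremal_seq a n) - k"
  then have k: "1 \<le> k" "k \<le> n" using assms by (simp_all add: extremal_seq_length)
  have "extremal_seq a n ! (k - 1) < k" "extremal_seq a n ! (n - k) \<le> n - k"
    using bad assms by (simp_all add: extremal_seq_length)
  then show False
    using k assms by (auto simp: extremal_seq_nth split: if_splits)
qed

text \<open>The realizing graph: the first a vertices form an independent set I, the last
  a vertices form a set A adjacent to everything, and the middle vertices form
  a clique. Every neighbour of I lies in A.\<close>

definition extremal_graph :: "nat \<Rightarrow> nat \<Rightarrow> nat \<Rightarrow> nat \<Rightarrow> bool" where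
  "extremal_graph a n u v \<longleftrightarrow> u < n \<and> v < n \<and> u \<noteq> v \<and>
     (n - a \<le> u \<or> n - a \<le> v \<or> (a \<le> u \<and> a \<le> v))"

lemma extremal_graph_graph_on: "graph_on n (extremal_graph a n)"
  by (auto simp: graph_on_def extremal_graph_def)

lemma extremal_graph_deg:
  assumes "2 * a + 2 \<le> n" "u < n"
  shows "deg (extremal_graph a n) u = extremal_seq a n ! u"
proof -
  consider "u < a" | "a \<le> u" "u < n - a" | "n - a \<le> u" by linarith
  then have "{v. extremal_graph a n u v} =
      (if u < a then {n - a..<n} else if u < n - a then {a..<n} - {u} else {..<n} - {u})"
    by cases (use assms in \<open>auto simp: extremal_graph_def\<close>)
  then show ?thesis
    using assms by (simp add: deg_def extremal_seq_nth)
qed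

lemma extremal_graph_realizes:
  assumes "2 * a + 2 \<le> n"
  shows "realizes (extremal_graph a n) (extremal_seq a n)"
proof -
  have len: "length (extremal_seq a n) = n" using assms by (simp add: extremal_seq_length)
  have "map (deg (extremal_graph a n)) [0..<n] = extremal_seq a n"
    by (rule nth_equalityI) (simp_all add: len extremal_graph_deg[OF assms])
  then show ?thesis
    unfolding realizes_def
    using len extremal_seq_sorted[OF assms] extremal_graph_graph_on
    by (simp add: sorted_sort_id)
qed

text \<open>The a independent vertices have only the a dominating vertices as
  neighbours and vertex a is outside both sets, so by
  the neighbourhood condition the graph is not Hamiltonian.\<close>

lemma extremal_graph_not_hamiltonian:
  assumes "1 \<le> a" "2 * a + 2 \<le> n"
  shows "\<not> hamiltonian n (extremal_graph a n)"
proof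
  assume ham: "hamiltonian n (extremal_graph a n)"
  have nb: "nbhd (extremal_graph a n) {..<a} = {n - a..<n}"
    using assms by (auto simp: nbhd_def extremal_graph_def intro: bexI[of _ 0])
  have "a \<notin> {..<a} \<union> nbhd (extremal_graph a n) {..<a}" "a < n"
    using assms by (simp_all add: nb)
  then have "{..<a} \<union> nbhd (extremal_graph a n) {..<a} \<noteq> {..<n}" by blast
  then have "card {..<a} < card (nbhd (extremal_graph a n) {..<a})"
    using assms hamiltonian_nbhd_exceeds[OF ham extremal_graph_graph_on, of "{..<a}"]
    by (simp add: lessThan_empty_iff)
  then show False using assms by (simp add: nb)
qed

theorem mainTheorem13:
  fixes n :: nat
  assumes "n \<ge> 4"
  shows "let m = n div 2;
             ds = replicate (m - 1) (m - 1) @ replicate (n - 2 * m + 2) (n - m)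
                  @ replicate (m - 1) (n - 1)
         in graphical ds \<and> BM (binding 1) ds \<and> \<not> BM hamiltonian ds"
proof -
  define m where "m = n div 2"
  define a where "a = m - 1"
  have a: "1 \<le> a" "2 * a + 2 \<le> n" using assms by (simp_all add: a_def m_def)
  have ds: "replicate (m - 1) (m - 1) @ replicate (n - 2 * m + 2) (n - m)
              @ replicate (m - 1) (n - 1) = extremal_seq a n"
  proof -
    have "n - 2 * m + 2 = n - 2 * a" "n - m = n - a - 1"
      using a by (simp_all add: a_def)
    then show ?thesis by (simp add: extremal_seq_def a_def)
  qed
  have realizes: "realizes (extremal_graph a n) (extremal_seq a n)"
    using extremal_graph_realizes[OF a(2)] .
  then have graphical: "graphical (extremal_seq a n)"
    using extremal_seq_sorted[OF a(2)] by (auto simp: graphical_def)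
  moreover have "BM (binding 1) (extremal_seq a n)"
    using graphical extremal_seq_condition[OF a] a(2)
    by (intro BM_binding_of_condition) (auto simp: extremal_seq_def)
  moreover have "\<not> BM hamiltonian (extremal_seq a n)"
    using not_BM_of_realization[OF realizes] extremal_graph_not_hamiltonian[OF a]
      extremal_seq_length a(2) by simp
  ultimately show ?thesis unfolding Let_def m_def[symmetric] ds by blast
qed

end
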